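(* Let $d\ge 1$ and let $p = x_1^{\alpha_1}\cdots x_d^{\alpha_d} - x_1^{\beta_1}\cdots x_d^{\beta_d}\in \overline{\mathbb{Q}}[x_1,\dots,x_d]$, with $\bm{\alpha}=(\alpha_1,\dots,\alpha_d),\bm{\beta}=(\beta_1,\dots,\beta_d)\in\mathbb{N}^d$, be an irreducible polynomial, and let $I=\langle p\rangle$. Let $L=\mathbb{Z}(\bm{\alpha}-\bm{\beta})\subseteq\mathbb{Z}^d$ and let $A=(a_{ij})\in\mathbb{Z}^{s\times d}$ ($s\ge1$) be an integer matrix with $\{\bm{u}\in\mathbb{Z}^d : A\bm{u}=\bm{0}\} = \operatorname{Sat}(L)$. Let $\pi_1,\dots,\pi_s$ be the first $s$ prime numbers and $\lambda_j=\prod_{i=1}^s \pi_i^{a_{ij}}$ for $j=1,\dots,d$. Then the invariant ideal of the linear loop with initial vector $(1,\dots,1)$ and update matrix $\operatorname{diag}(\lambda_1,\dots,\lambda_d)$ is exactly $I$.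
   Context: Throughout, $\mathbb{K}=\overline{\mathbb{Q}}$. A linear loop with initial vector $\bm{s}$ and update matrix $M$ (a $d\times d$ matrix) produces the orbit $\bm{x}(n)=M^n\bm{s}$, $n\ge 0$. A polynomial $P\in\mathbb{K}[x_1,\dots,x_d]$ is an invariant of the loop if $P(\bm{x}(n))=0$ for all $n\ge0$; the invariant ideal of the loop is the ideal of all its invariants. For a sublattice $L\subseteq\mathbb{Z}^d$, $\operatorname{Sat}(L)=\{\bm{u}\in\mathbb{Z}^d : c\bm{u}\in L \text{ for some } c\in\mathbb{Z}\setminus\{0\}\}$. (Such a matrix $A$ always exists; this loop is the output of the paper's synthesis procedure on input $I$.) *)

theory Defs
  imports Complex_Main "HOL-Library.Poly_Mapping" "HOL-Library.Infinite_Set"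
    "HOL-Computational_Algebra.Primes" "HOL-Computational_Algebra.Polynomial"
begin

text \<open>Multivariate polynomials over Qbar, represented as finitely supported maps from
  monomials (exponent vectors nat \<Rightarrow>0 nat, variable x_(i+1) has index i) to complex
  coefficients; Qbar is the set of algebraic complex numbers.\<close>

type_synonym mpoly = "(nat \<Rightarrow>\<^sub>0 nat) \<Rightarrow>\<^sub>0 complex"

definition monom :: "(nat \<Rightarrow>\<^sub>0 nat) \<Rightarrow> mpoly" where
  "monom m = Poly_Mapping.single m 1"

definition qbar_poly :: "nat \<Rightarrow> mpoly set" where
  "qbar_poly d = {P. (\<forall>m. algebraic (Poly_Mapping.lookup P m)) \<and>
                     (\<forall>m \<in> Poly_Mapping.keys P. Poly_Mapping.keys m \<subseteq> {..<d})}"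

definition eval_mpoly :: "mpoly \<Rightarrow> (nat \<Rightarrow> complex) \<Rightarrow> complex" where
  "eval_mpoly P x = (\<Sum>m\<in>Poly_Mapping.keys P. Poly_Mapping.lookup P m * (\<Prod>i\<in>Poly_Mapping.keys m. x i ^ Poly_Mapping.lookup m i))"

definition unit_in :: "nat \<Rightarrow> mpoly \<Rightarrow> bool" where
  "unit_in d u \<longleftrightarrow> u \<in> qbar_poly d \<and> (\<exists>v \<in> qbar_poly d. u * v = 1)"

definition irreducible_in :: "nat \<Rightarrow> mpoly \<Rightarrow> bool" where
  "irreducible_in d p \<longleftrightarrow> p \<in> qbar_poly d \<and> p \<noteq> 0 \<and> \<not> unit_in d p \<and>
     (\<forall>a \<in> qbar_poly d. \<forall>b \<in> qbar_poly d. p = a * b \<longrightarrow> unit_in d a \<or> unit_in d b)"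

definition principal_ideal :: "nat \<Rightarrow> mpoly \<Rightarrow> mpoly set" where
  "principal_ideal d p = {q * p | q. q \<in> qbar_poly d}"

definition mat_vec :: "nat \<Rightarrow> (nat \<Rightarrow> nat \<Rightarrow> complex) \<Rightarrow> (nat \<Rightarrow> complex) \<Rightarrow> (nat \<Rightarrow> complex)" where
  "mat_vec d M v = (\<lambda>i. if i < d then (\<Sum>j<d. M i j * v j) else 0)"

definition loop_orbit :: "nat \<Rightarrow> (nat \<Rightarrow> nat \<Rightarrow> complex) \<Rightarrow> (nat \<Rightarrow> complex) \<Rightarrow> nat \<Rightarrow> (nat \<Rightarrow> complex)" where
  "loop_orbit d M s n = (mat_vec d M ^^ n) s"

definition invariant_ideal :: "nat \<Rightarrow> (nat \<Rightarrow> nat \<Rightarrow> complex) \<Rightarrow> (nat \<Rightarrow> complex) \<Rightarrow> mpoly set" where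
  "invariant_ideal d M s = {P \<in> qbar_poly d. \<forall>n. eval_mpoly P (loop_orbit d M s n) = 0}"

definition int_vecs :: "nat \<Rightarrow> (nat \<Rightarrow> int) set" where
  "int_vecs d = {u. \<forall>i\<ge>d. u i = 0}"

definition Sat :: "nat \<Rightarrow> (nat \<Rightarrow> int) set \<Rightarrow> (nat \<Rightarrow> int) set" where
  "Sat d L = {u \<in> int_vecs d. \<exists>c::int. c \<noteq> 0 \<and> (\<lambda>i. c * u i) \<in> L}"

text \<open>The k-th prime, 0-indexed: nth_prime 0 = 2.\<close>
definition nth_prime :: "nat \<Rightarrow> nat" where
  "nth_prime k = enumerate {p. prime p} k"

end

(*
  The orbit of the loop is x(n) = (lambda_1^n, ..., lambda_d^n), so a polynomial P = sum c_m x^m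
  vanishes on it iff sum_m c_m (lambda^m)^n = 0 for all n. Geometric sequences with distinct ratios
  are linearly independent, hence this happens iff for every value z the coefficients of the
  monomials with lambda^m = z sum to zero. By unique factorisation lambda^m = lambda^m' iff
  A (m - m') = 0, i.e. iff m - m' lies in Sat(L). Irreducibility of p forces alpha and beta to
  have disjoint supports and alpha - beta to be primitive, so Sat(L) = Z (alpha - beta), and then
  x^m - x^m' is a multiple of p whenever m - m' is a multiple of alpha - beta (move from x^m to
  x^m' one factor x^alpha -> x^beta at a time). Grouping the monomials of P by the value of
  lambda^m therefore writes P as a combination of such differences. Conversely p vanishes on the
  orbit because lambda^alpha = lambda^beta.
*)
theory Submission
  imports Defs
begin

section \<open>Algebraic numbers form a ring\<close>

interpretation rat_vs: vector_space "\<lambda>(r::rat) (z::'a::field_char_0). of_rat r * z"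
  by unfold_locales (auto simp: algebra_simps of_rat_add of_rat_mult)

lemma algebraic_powers_in_finite_span:
  fixes a :: "'a::field_char_0"
  assumes "algebraic a"
  obtains B where "finite B" "\<And>i. a ^ i \<in> rat_vs.span B"
proof -
  obtain p where p_rat: "\<forall>i. coeff p i \<in> \<rat>" and "p \<noteq> 0" and "poly p a = 0"
    using assms unfolding algebraic_altdef by blast
  define n where "n = degree p"
  have "\<forall>i. \<exists>q. coeff p i = of_rat q"
    using p_rat by (auto elim: Rats_cases)
  then obtain r where r: "\<And>i. coeff p i = of_rat (r i)"
    by metis
  have "r n \<noteq> 0" using \<open>p \<noteq> 0\<close> r[of n] by (auto simp: n_def)
  have "(\<Sum>i<Suc n. of_rat (r i) * a ^ i) = 0"
    using \<open>poly p a = 0\<close> unfolding poly_altdef n_def lessThan_Suc_atMost r by simp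
  then have leading: "of_rat (r n) * a ^ n = (\<Sum>j<n. of_rat (- r j) * a ^ j)"
    by (simp add: of_rat_minus sum_negf eq_neg_iff_add_eq_0 add.commute)
  have "a ^ n = of_rat (inverse (r n)) * (of_rat (r n) * a ^ n)"
    using \<open>r n \<noteq> 0\<close> by (simp flip: mult.assoc of_rat_mult)
  also have "\<dots> = (\<Sum>j<n. of_rat (- r j / r n) * a ^ j)"
    unfolding leading sum_distrib_left by (simp add: divide_inverse of_rat_mult of_rat_minus mult_ac)
  finally have a_n: "a ^ n = (\<Sum>j<n. of_rat (- r j / r n) * a ^ j)" .
  have "a ^ i \<in> rat_vs.span (power a ` {..<n})" for i
  proof (induction i rule: less_induct)
    case (less i)
    show ?case
    proof (cases "i < n")
      case False
      then have "a ^ i = a ^ (i - n) * a ^ n"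
        by (simp flip: power_add)
      also have "\<dots> = (\<Sum>j<n. of_rat (- r j / r n) * a ^ (i - n + j))"
        unfolding a_n sum_distrib_left by (simp add: power_add mult_ac)
      also have "\<dots> \<in> rat_vs.span (power a ` {..<n})"
        using False by (intro rat_vs.span_sum rat_vs.span_scale less) auto
      finally show ?thesis .
    qed (auto intro: rat_vs.span_base)
  qed
  then show ?thesis by (intro that[of "power a ` {..<n}"]) auto
qed

lemma rat_vs_span_mult:
  fixes x y :: "'a::field_char_0"
  assumes "x \<in> rat_vs.span A" "y \<in> rat_vs.span B"
  shows "x * y \<in> rat_vs.span ((\<lambda>(u, v). u * v) ` (A \<times> B))"
proof -
  let ?AB = "rat_vs.span ((\<lambda>(u, v). u * v) ` (A \<times> B))"
  have "u * y \<in> ?AB" if "u \<in> A" for u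
    using assms(2)
  proof (induction y rule: rat_vs.span_induct_alt)
    case (step c v y)
    have "u * v \<in> ?AB" using that step(1) by (intro rat_vs.span_base) force
    moreover have "u * (of_rat c * v + y) = of_rat c * (u * v) + u * y"
      by (simp add: algebra_simps)
    ultimately show ?case
      using step(2) by (simp add: rat_vs.span_add rat_vs.span_scale)
  qed (simp add: rat_vs.span_zero)
  with assms(1) show ?thesis
    by (induction x rule: rat_vs.span_induct_alt)
      (simp_all add: distrib_right mult.assoc rat_vs.span_zero rat_vs.span_add rat_vs.span_scale)
qed

lemma algebraic_if_powers_in_finite_span:
  fixes z :: "'a::field_char_0"
  assumes "finite B" "\<And>k. z ^ k \<in> rat_vs.span B"
  shows "algebraic z"
proof (cases "inj_on (power z) {..card B}")
  case False
  then obtain i j where "i < j" "z ^ i = z ^ j"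
    unfolding inj_on_def by (metis linorder_neqE_nat)
  then show ?thesis
    by (intro algebraicI[of "Polynomial.monom 1 j - Polynomial.monom 1 i"])
      (auto simp: coeff_monom poly_monom dest: arg_cong[of _ _ "\<lambda>p. coeff p j"])
next
  case True
  define S where "S = power z ` {..card B}"
  have "card S = Suc (card B)" using True by (simp add: S_def card_image)
  moreover have "S \<subseteq> rat_vs.span B" using assms(2) by (auto simp: S_def)
  ultimately have "\<not> rat_vs.independent S"
    using rat_vs.independent_span_bound[OF assms(1)] by fastforce
  then obtain T u where T: "finite T" "T \<subseteq> S" "(\<Sum>v\<in>T. of_rat (u v) * v) = 0" "\<exists>v\<in>T. u v \<noteq> 0"
    unfolding rat_vs.dependent_explicit by blast
  define c where "c k = (if z ^ k \<in> T then u (z ^ k) else 0)" for k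
  define p where "p = (\<Sum>k\<le>card B. Polynomial.monom (of_rat (c k) :: 'a) k)"
  have coeff_p: "coeff p k = (if k \<le> card B then of_rat (c k) else 0)" for k
    by (simp add: p_def coeff_sum coeff_monom)
  obtain k where "k \<le> card B" "z ^ k \<in> T" "u (z ^ k) \<noteq> 0"
    using T(2,4) by (auto simp: S_def)
  then have "coeff p k \<noteq> 0" by (simp add: coeff_p c_def)
  then have "p \<noteq> 0" by auto
  have "poly p z = (\<Sum>k\<in>{k. k \<le> card B \<and> z ^ k \<in> T}. of_rat (u (z ^ k)) * z ^ k)"
    unfolding p_def poly_sum poly_monom by (rule sum.mono_neutral_cong_right) (auto simp: c_def)
  also have "\<dots> = (\<Sum>v\<in>T. of_rat (u v) * v)"
    using True T(2) by (intro sum.reindex_bij_betw) (auto simp: bij_betw_def S_def inj_on_def image_iff)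
  finally have "poly p z = 0" using T(3) by simp
  with \<open>p \<noteq> 0\<close> show ?thesis by (intro algebraicI'[of p]) (auto simp: coeff_p)
qed

lemma algebraic_plus_times:
  fixes a b :: "'a::field_char_0"
  assumes "algebraic a" "algebraic b"
  shows algebraic_plus: "algebraic (a + b)" and algebraic_times: "algebraic (a * b)"
proof -
  obtain A where A: "finite A" "\<And>i. a ^ i \<in> rat_vs.span A"
    using algebraic_powers_in_finite_span[OF assms(1)] by blast
  obtain B where B: "finite B" "\<And>i. b ^ i \<in> rat_vs.span B"
    using algebraic_powers_in_finite_span[OF assms(2)] by blast
  let ?AB = "(\<lambda>(u, v). u * v) ` (A \<times> B)"
  have "finite ?AB" using A B by auto
  have products: "a ^ i * b ^ j \<in> rat_vs.span ?AB" for i j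
    using rat_vs_span_mult A B by blast
  show "algebraic (a * b)"
    by (rule algebraic_if_powers_in_finite_span[OF \<open>finite ?AB\<close>]) (simp add: power_mult_distrib products)
  show "algebraic (a + b)"
  proof (rule algebraic_if_powers_in_finite_span[OF \<open>finite ?AB\<close>])
    fix k
    have "(a + b) ^ k = (\<Sum>i\<le>k. of_rat (of_nat (k choose i)) * (a ^ i * b ^ (k - i)))"
      by (simp add: binomial_ring of_rat_of_nat_eq mult.assoc)
    also have "\<dots> \<in> rat_vs.span ?AB"
      by (intro rat_vs.span_sum rat_vs.span_scale products)
    finally show "(a + b) ^ k \<in> rat_vs.span ?AB" .
  qed
qed

section \<open>Multivariate polynomials over the algebraic numbers\<close>

lemma poly_mapping_sum_single:
  "(P :: 'a \<Rightarrow>\<^sub>0 'b::comm_monoid_add) =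
     (\<Sum>m\<in>Poly_Mapping.keys P. Poly_Mapping.single m (Poly_Mapping.lookup P m))"
  by (rule poly_mapping_eqI) (auto simp: lookup_sum lookup_single when_def in_keys_iff)

lemma single_sum:
  "Poly_Mapping.single k (sum f X) = (\<Sum>x\<in>X. Poly_Mapping.single k (f x))"
  by (induction X rule: infinite_finite_induct) (simp_all add: single_add)

lemma keys_diff_subset: "Poly_Mapping.keys ((a::nat \<Rightarrow>\<^sub>0 nat) - b) \<subseteq> Poly_Mapping.keys a"
  by (auto simp: in_keys_iff lookup_minus)

lemma monom_0 [simp]: "monom 0 = 1"
  by (simp add: monom_def)

lemma monom_add: "monom (m + m') = monom m * monom m'"
  by (simp add: monom_def mult_single)

lemma monom_sum: "monom (sum f X) = (\<Prod>x\<in>X. monom (f x))"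
  by (induction X rule: infinite_finite_induct) (simp_all add: monom_add)

lemma times_mpoly_expand:
  "(P :: mpoly) * Q = (\<Sum>m\<in>Poly_Mapping.keys P. \<Sum>m'\<in>Poly_Mapping.keys Q.
      Poly_Mapping.single (m + m') (Poly_Mapping.lookup P m * Poly_Mapping.lookup Q m'))"
  by (subst (1) poly_mapping_sum_single[of P], subst (1) poly_mapping_sum_single[of Q])
    (simp add: sum_product mult_single)

definition monom_value :: "(nat \<Rightarrow>\<^sub>0 nat) \<Rightarrow> (nat \<Rightarrow> complex) \<Rightarrow> complex" where
  "monom_value m x = (\<Prod>i\<in>Poly_Mapping.keys m. x i ^ Poly_Mapping.lookup m i)"

lemma monom_value_superset:
  assumes "finite S" "Poly_Mapping.keys m \<subseteq> S"
  shows "monom_value m x = (\<Prod>i\<in>S. x i ^ Poly_Mapping.lookup m i)"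
  unfolding monom_value_def using assms by (intro prod.mono_neutral_left) (auto simp: in_keys_iff)

lemma monom_value_0 [simp]: "monom_value 0 x = 1"
  by (simp add: monom_value_def)

lemma monom_value_add: "monom_value (m + m') x = monom_value m x * monom_value m' x"
proof -
  let ?S = "Poly_Mapping.keys m \<union> Poly_Mapping.keys m'"
  have "monom_value (m + m') x = (\<Prod>i\<in>?S. x i ^ Poly_Mapping.lookup (m + m') i)"
    using keys_add[of m m'] by (intro monom_value_superset) auto
  also have "\<dots> = monom_value m x * monom_value m' x"
    by (simp add: monom_value_superset[of ?S] lookup_add power_add prod.distrib)
  finally show ?thesis .
qed

lemma monom_value_ones [simp]: "monom_value m (\<lambda>_. 1) = 1"
  by (simp add: monom_value_def)

lemma monom_value_at_point:
  "monom_value m (\<lambda>i. if i = j then z else 1) = z ^ Poly_Mapping.lookup m j"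
proof -
  have "monom_value m (\<lambda>i. if i = j then z else 1) =
      (\<Prod>i\<in>Poly_Mapping.keys m. if i = j then z ^ Poly_Mapping.lookup m i else 1)"
    unfolding monom_value_def by (intro prod.cong) auto
  also have "\<dots> = z ^ Poly_Mapping.lookup m j"
    by (subst prod.delta) (auto simp: in_keys_iff)
  finally show ?thesis .
qed

lemma eval_mpoly_superset:
  assumes "finite S" "Poly_Mapping.keys P \<subseteq> S"
  shows "eval_mpoly P x = (\<Sum>m\<in>S. Poly_Mapping.lookup P m * monom_value m x)"
  unfolding eval_mpoly_def monom_value_def[symmetric] using assms
  by (intro sum.mono_neutral_left) (auto simp: in_keys_iff)

lemma eval_mpoly_0 [simp]: "eval_mpoly 0 x = 0"
  by (simp add: eval_mpoly_def)

lemma eval_mpoly_add: "eval_mpoly (P + Q) x = eval_mpoly P x + eval_mpoly Q x"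
proof -
  let ?S = "Poly_Mapping.keys P \<union> Poly_Mapping.keys Q"
  have "eval_mpoly (P + Q) x = (\<Sum>m\<in>?S. Poly_Mapping.lookup (P + Q) m * monom_value m x)"
    using keys_add[of P Q] by (intro eval_mpoly_superset) auto
  also have "\<dots> = eval_mpoly P x + eval_mpoly Q x"
    by (simp add: eval_mpoly_superset[of ?S] lookup_add distrib_right sum.distrib)
  finally show ?thesis .
qed

lemma eval_mpoly_uminus: "eval_mpoly (- P) x = - eval_mpoly P x"
  by (simp add: eval_mpoly_def sum_negf)

lemma eval_mpoly_diff: "eval_mpoly (P - Q) x = eval_mpoly P x - eval_mpoly Q x"
  using eval_mpoly_add[of P "- Q" x] by (simp add: eval_mpoly_uminus)

lemma eval_mpoly_sum: "eval_mpoly (sum f X) x = (\<Sum>a\<in>X. eval_mpoly (f a) x)"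
  by (induction X rule: infinite_finite_induct) (auto simp: eval_mpoly_add)

lemma eval_mpoly_single: "eval_mpoly (Poly_Mapping.single m c) x = c * monom_value m x"
  by (subst eval_mpoly_superset[of "{m}"]) auto

lemma eval_mpoly_monom: "eval_mpoly (monom m) x = monom_value m x"
  by (simp add: monom_def eval_mpoly_single)

lemma eval_mpoly_mult: "eval_mpoly (P * Q) x = eval_mpoly P x * eval_mpoly Q x"
proof -
  have "eval_mpoly (P * Q) x = (\<Sum>m\<in>Poly_Mapping.keys P. \<Sum>m'\<in>Poly_Mapping.keys Q.
      Poly_Mapping.lookup P m * monom_value m x * (Poly_Mapping.lookup Q m' * monom_value m' x))"
    by (subst times_mpoly_expand) (simp add: eval_mpoly_sum eval_mpoly_single monom_value_add mult_ac)
  also have "\<dots> = eval_mpoly P x * eval_mpoly Q x"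
    by (simp add: eval_mpoly_def monom_value_def sum_product)
  finally show ?thesis .
qed

lemma eval_mpoly_1 [simp]: "eval_mpoly 1 x = 1"
  using eval_mpoly_single[of 0 1 x] by simp

lemma eval_mpoly_power: "eval_mpoly (P ^ n) x = eval_mpoly P x ^ n"
  by (induction n) (auto simp: eval_mpoly_mult)

lemma qbar_polyD:
  assumes "P \<in> qbar_poly d"
  shows "algebraic (Poly_Mapping.lookup P m)"
    and "m \<in> Poly_Mapping.keys P \<Longrightarrow> Poly_Mapping.keys m \<subseteq> {..<d}"
  using assms unfolding qbar_poly_def by blast+

lemma qbar_poly_add: "P \<in> qbar_poly d \<Longrightarrow> Q \<in> qbar_poly d \<Longrightarrow> P + Q \<in> qbar_poly d"
  using keys_add[of P Q] unfolding qbar_poly_def by (auto simp: lookup_add intro!: algebraic_plus) blast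

lemma qbar_poly_uminus: "P \<in> qbar_poly d \<Longrightarrow> - P \<in> qbar_poly d"
  unfolding qbar_poly_def by auto

lemma qbar_poly_diff: "P \<in> qbar_poly d \<Longrightarrow> Q \<in> qbar_poly d \<Longrightarrow> P - Q \<in> qbar_poly d"
  using qbar_poly_add[of P d "- Q"] qbar_poly_uminus[of Q d] by simp

lemma qbar_poly_0: "0 \<in> qbar_poly d"
  unfolding qbar_poly_def by auto

lemma qbar_poly_sum: "(\<And>x. x \<in> X \<Longrightarrow> f x \<in> qbar_poly d) \<Longrightarrow> sum f X \<in> qbar_poly d"
  by (induction X rule: infinite_finite_induct) (auto intro: qbar_poly_add qbar_poly_0)

lemma qbar_poly_single:
  "algebraic c \<Longrightarrow> Poly_Mapping.keys m \<subseteq> {..<d} \<Longrightarrow> Poly_Mapping.single m c \<in> qbar_poly d"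
  unfolding qbar_poly_def by (auto simp: lookup_single when_def)

lemma qbar_poly_monom: "Poly_Mapping.keys m \<subseteq> {..<d} \<Longrightarrow> monom m \<in> qbar_poly d"
  unfolding monom_def by (rule qbar_poly_single) simp_all

lemma qbar_poly_mult:
  assumes "P \<in> qbar_poly d" "Q \<in> qbar_poly d"
  shows "P * Q \<in> qbar_poly d"
  unfolding times_mpoly_expand
proof (intro qbar_poly_sum qbar_poly_single algebraic_times)
  fix m m' assume "m \<in> Poly_Mapping.keys P" "m' \<in> Poly_Mapping.keys Q"
  then show "Poly_Mapping.keys (m + m') \<subseteq> {..<d}"
    using keys_add[of m m'] qbar_polyD(2)[OF assms(1)] qbar_polyD(2)[OF assms(2)] by blast
qed (use assms qbar_polyD(1) in auto)

lemma qbar_poly_1: "1 \<in> qbar_poly d"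
  using qbar_poly_monom[of 0 d] by simp

lemma qbar_poly_power: "P \<in> qbar_poly d \<Longrightarrow> P ^ n \<in> qbar_poly d"
  by (induction n) (auto intro: qbar_poly_mult qbar_poly_1)

lemma principal_ideal_add:
  assumes "a \<in> principal_ideal d p" "b \<in> principal_ideal d p"
  shows "a + b \<in> principal_ideal d p"
proof -
  obtain q q' where "q \<in> qbar_poly d" "q' \<in> qbar_poly d" "a = q * p" "b = q' * p"
    using assms unfolding principal_ideal_def by blast
  then show ?thesis
    unfolding principal_ideal_def by (auto simp: distrib_right intro!: exI[of _ "q + q'"] qbar_poly_add)
qed

lemma principal_ideal_uminus:
  assumes "a \<in> principal_ideal d p"
  shows "- a \<in> principal_ideal d p"
proof -
  obtain q where "q \<in> qbar_poly d" "a = q * p"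
    using assms unfolding principal_ideal_def by blast
  then show ?thesis
    unfolding principal_ideal_def by (intro CollectI exI[of _ "- q"]) (simp add: qbar_poly_uminus)
qed

lemma principal_ideal_0: "0 \<in> principal_ideal d p"
  unfolding principal_ideal_def using qbar_poly_0 by force

lemma principal_ideal_mult:
  "a \<in> qbar_poly d \<Longrightarrow> b \<in> principal_ideal d p \<Longrightarrow> a * b \<in> principal_ideal d p"
  unfolding principal_ideal_def by (auto simp: mult.assoc intro: qbar_poly_mult)

lemma principal_ideal_sum:
  "(\<And>x. x \<in> X \<Longrightarrow> f x \<in> principal_ideal d p) \<Longrightarrow> sum f X \<in> principal_ideal d p"
  by (induction X rule: infinite_finite_induct) (auto intro: principal_ideal_add principal_ideal_0)

lemma principal_ideal_generator: "p \<in> principal_ideal d p"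
  unfolding principal_ideal_def using qbar_poly_1 by force

section \<open>Irreducible binomials\<close>

lemma unit_in_eval_nonzero:
  assumes "unit_in d u"
  shows "eval_mpoly u x \<noteq> 0"
proof -
  obtain v where "u * v = 1" using assms unfolding unit_in_def by blast
  then have "eval_mpoly u x * eval_mpoly v x = 1" by (metis eval_mpoly_1 eval_mpoly_mult)
  then show ?thesis by auto
qed

lemma irreducible_in_no_vanishing_factors:
  assumes "irreducible_in d p" "a \<in> qbar_poly d" "b \<in> qbar_poly d" "p = a * b"
    and "eval_mpoly a x = 0" "eval_mpoly b y = 0"
  shows False
  using assms unit_in_eval_nonzero unfolding irreducible_in_def by blast

lemma irreducible_binomial_disjoint_supports:
  assumes irr: "irreducible_in d (monom \<alpha> - monom \<beta>)"
    and "Poly_Mapping.keys \<alpha> \<subseteq> {..<d}" "Poly_Mapping.keys \<beta> \<subseteq> {..<d}"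
  shows "Poly_Mapping.lookup \<alpha> j = 0 \<or> Poly_Mapping.lookup \<beta> j = 0"
proof (rule ccontr)
  assume "\<not> ?thesis"
  then have pos: "Poly_Mapping.lookup \<alpha> j > 0" "Poly_Mapping.lookup \<beta> j > 0" by auto
  define e :: "nat \<Rightarrow>\<^sub>0 nat" where "e = Poly_Mapping.single j 1"
  have "j \<in> Poly_Mapping.keys \<alpha>" using pos(1) by (simp add: in_keys_iff)
  then have "j < d" using assms(2) by auto
  have "\<alpha> = e + (\<alpha> - e)" "\<beta> = e + (\<beta> - e)"
    using pos by (auto intro!: poly_mapping_eqI simp: e_def lookup_add lookup_minus lookup_single when_def)
  then have "monom \<alpha> - monom \<beta> = monom e * (monom (\<alpha> - e) - monom (\<beta> - e))"
    by (metis monom_add right_diff_distrib)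
  moreover have "monom e \<in> qbar_poly d"
    using \<open>j < d\<close> by (intro qbar_poly_monom) (auto simp: e_def)
  moreover have "monom (\<alpha> - e) - monom (\<beta> - e) \<in> qbar_poly d"
    using keys_diff_subset[of \<alpha> e] keys_diff_subset[of \<beta> e] assms(2,3)
    by (intro qbar_poly_diff qbar_poly_monom) auto
  moreover have "eval_mpoly (monom e) (\<lambda>_. 0) = 0"
    by (simp add: eval_mpoly_monom monom_value_def e_def)
  moreover have "eval_mpoly (monom (\<alpha> - e) - monom (\<beta> - e)) (\<lambda>_. 1) = 0"
    by (simp add: eval_mpoly_diff eval_mpoly_monom)
  ultimately show False using irreducible_in_no_vanishing_factors[OF irr] by blast
qed

lemma cis_two_pi_div_ne_1:
  assumes "(n::nat) \<ge> 2"
  shows "cis (2 * pi / n) \<noteq> 1"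
proof -
  have "cos (2 * pi / n) < cos 0"
    using assms by (intro cos_monotone_0_pi) (auto simp: field_simps)
  then show ?thesis by (metis cis.sel(1) cos_zero less_irrefl one_complex.sel(1))
qed

text \<open>Factor \<open>F\<^sup>Q - G\<^sup>Q = (F - G) H\<close>: the first factor vanishes at \<open>(1,\<dots>,1)\<close>, the
  second at a point where \<open>F/G\<close> is a primitive \<open>Q\<close>-th root of unity.\<close>
lemma binomial_power_not_irreducible:
  assumes "Q \<ge> 2" and "\<alpha> \<noteq> \<beta>"
    and ka: "Poly_Mapping.keys \<alpha> \<subseteq> {..<d}" and kb: "Poly_Mapping.keys \<beta> \<subseteq> {..<d}"
    and disj: "\<And>j. Poly_Mapping.lookup \<alpha> j = 0 \<or> Poly_Mapping.lookup \<beta> j = 0"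
  shows "\<not> irreducible_in d (monom \<alpha> ^ Q - monom \<beta> ^ Q)"
proof
  assume irr: "irreducible_in d (monom \<alpha> ^ Q - monom \<beta> ^ Q)"
  define H where "H = (\<Sum>k<Q. monom \<alpha> ^ k * monom \<beta> ^ (Q - 1 - k))"
  have factor: "monom \<alpha> ^ Q - monom \<beta> ^ Q = (monom \<alpha> - monom \<beta>) * H"
    using diff_power_eq_sum[of "monom \<alpha>" "Q - 1" "monom \<beta>"] \<open>Q \<ge> 2\<close>
    by (simp add: H_def Suc_diff_1)
  have in_qbar: "monom \<alpha> \<in> qbar_poly d" "monom \<beta> \<in> qbar_poly d"
    using ka kb by (auto intro: qbar_poly_monom)
  obtain j where j: "Poly_Mapping.lookup \<alpha> j \<noteq> Poly_Mapping.lookup \<beta> j"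
    using \<open>\<alpha> \<noteq> \<beta>\<close> by (meson poly_mapping_eqI)
  define a where "a = Poly_Mapping.lookup \<alpha> j + Poly_Mapping.lookup \<beta> j"
  have "a > 0" using j disj[of j] by (auto simp: a_def)
  define \<rho> where "\<rho> = cis (2 * pi / (Q * a))"
  define x where "x = (\<lambda>i. if i = j then \<rho> else 1)"
  have "\<rho> ^ a = cis (2 * pi / Q)"
    using \<open>a > 0\<close> by (simp add: \<rho>_def DeMoivre field_simps)
  moreover have "cis (2 * pi / Q) ^ Q = 1"
    using \<open>Q \<ge> 2\<close> by (simp add: DeMoivre)
  moreover have "cis (2 * pi / Q) \<noteq> 1"
    using cis_two_pi_div_ne_1[OF \<open>Q \<ge> 2\<close>] .
  ultimately have "eval_mpoly (monom \<alpha> - monom \<beta>) x \<noteq> 0"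
    and "eval_mpoly (monom \<alpha> ^ Q - monom \<beta> ^ Q) x = 0"
    using disj[of j]
    by (auto simp: eval_mpoly_diff eval_mpoly_power eval_mpoly_monom x_def monom_value_at_point a_def)
  then have "eval_mpoly H x = 0"
    unfolding factor eval_mpoly_mult by simp
  moreover have "eval_mpoly (monom \<alpha> - monom \<beta>) (\<lambda>_. 1) = 0"
    by (simp add: eval_mpoly_diff eval_mpoly_monom)
  moreover have "H \<in> qbar_poly d"
    unfolding H_def using in_qbar by (intro qbar_poly_sum qbar_poly_mult qbar_poly_power)
  ultimately show False
    using irreducible_in_no_vanishing_factors[OF irr _ _ factor] qbar_poly_diff[OF in_qbar] by blast
qed

lemma poly_mapping_divide_exponents:
  fixes \<alpha> :: "'a \<Rightarrow>\<^sub>0 nat"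
  assumes "\<And>j. Q dvd Poly_Mapping.lookup \<alpha> j"
  obtains \<alpha>' where "\<alpha> = (\<Sum>_<Q. \<alpha>')" and "Poly_Mapping.keys \<alpha>' \<subseteq> Poly_Mapping.keys \<alpha>"
proof
  let ?\<alpha>' = "Poly_Mapping.map (\<lambda>e. e div Q) \<alpha>"
  have lookup: "Poly_Mapping.lookup ?\<alpha>' j = Poly_Mapping.lookup \<alpha> j div Q" for j
    by (simp add: map.rep_eq when_def)
  show "\<alpha> = (\<Sum>_<Q. ?\<alpha>')"
    using assms by (intro poly_mapping_eqI) (simp add: lookup_sum lookup)
  show "Poly_Mapping.keys ?\<alpha>' \<subseteq> Poly_Mapping.keys \<alpha>"
    by (auto simp: in_keys_iff lookup intro!: gr0I)
qed

lemma irreducible_binomial_primitive: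
  assumes irr: "irreducible_in d (monom \<alpha> - monom \<beta>)"
    and ka: "Poly_Mapping.keys \<alpha> \<subseteq> {..<d}" and kb: "Poly_Mapping.keys \<beta> \<subseteq> {..<d}"
    and "prime (q::int)"
  shows "\<not> (\<forall>j. q dvd int (Poly_Mapping.lookup \<alpha> j) - int (Poly_Mapping.lookup \<beta> j))"
proof
  assume dvd: "\<forall>j. q dvd int (Poly_Mapping.lookup \<alpha> j) - int (Poly_Mapping.lookup \<beta> j)"
  define Q where "Q = nat q"
  have "Q \<ge> 2" "q = int Q" using prime_ge_2_int[OF \<open>prime q\<close>] by (auto simp: Q_def)
  have disj: "Poly_Mapping.lookup \<alpha> j = 0 \<or> Poly_Mapping.lookup \<beta> j = 0" for j
    using irreducible_binomial_disjoint_supports[OF irr ka kb] .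
  have "Q dvd Poly_Mapping.lookup \<alpha> j" "Q dvd Poly_Mapping.lookup \<beta> j" for j
    using dvd[rule_format, of j] disj[of j] \<open>q = int Q\<close> by (auto simp flip: int_dvd_int_iff)
  then obtain \<alpha>' \<beta>' where \<alpha>': "\<alpha> = (\<Sum>_<Q. \<alpha>')" "Poly_Mapping.keys \<alpha>' \<subseteq> Poly_Mapping.keys \<alpha>"
    and \<beta>': "\<beta> = (\<Sum>_<Q. \<beta>')" "Poly_Mapping.keys \<beta>' \<subseteq> Poly_Mapping.keys \<beta>"
    by (metis poly_mapping_divide_exponents)
  have "\<alpha> \<noteq> \<beta>" using irr by (auto simp: irreducible_in_def)
  then have "\<alpha>' \<noteq> \<beta>'" using \<alpha>' \<beta>' by auto
  moreover have "Poly_Mapping.lookup \<alpha>' j = 0 \<or> Poly_Mapping.lookup \<beta>' j = 0" for j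
    using \<alpha>'(2) \<beta>'(2) disj[of j] by (metis in_keys_iff subsetD)
  moreover have "monom \<alpha> - monom \<beta> = monom \<alpha>' ^ Q - monom \<beta>' ^ Q"
    unfolding \<alpha>'(1) \<beta>'(1) monom_sum by simp
  ultimately show False
    using binomial_power_not_irreducible[OF \<open>Q \<ge> 2\<close>, of \<alpha>' \<beta>' d] irr \<alpha>'(2) \<beta>'(2) ka kb by auto
qed

section \<open>Primitive vectors and unique factorisation\<close>

lemma multiple_of_primitive_vector:
  fixes u w :: "'a \<Rightarrow> int"
  assumes primitive: "\<And>q. prime q \<Longrightarrow> \<not> (\<forall>j. q dvd w j)"
    and "c \<noteq> 0" and multiple: "\<And>j. c * u j = c' * w j"
  obtains t where "\<And>j. u j = t * w j"
proof -
  have "gcd c c' \<noteq> 0" using \<open>c \<noteq> 0\<close> by simp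
  then obtain a b g where ab: "c = a * g" "c' = b * g" "coprime a b" "g \<noteq> 0"
    using gcd_coprime_exists by blast
  have "g * (a * u j) = g * (b * w j)" for j
    using multiple[of j] unfolding ab(1,2) by (simp add: mult_ac)
  then have au: "a * u j = b * w j" for j
    using \<open>g \<noteq> 0\<close> by simp
  have a_dvd: "a dvd w j" for j
  proof -
    have "a dvd b * w j" unfolding au[symmetric] by simp
    then show ?thesis using coprime_dvd_mult_right_iff[OF \<open>coprime a b\<close>] by blast
  qed
  have "\<bar>a\<bar> = 1"
  proof (rule ccontr)
    assume "\<bar>a\<bar> \<noteq> 1"
    then obtain q where "prime q" "q dvd a" by (rule prime_factor_int)
    then show False using primitive a_dvd dvd_trans by blast
  qed
  then have "a * a = 1" by (metis abs_mult_self_eq mult_1)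
  then have "u j = (a * b) * w j" for j
    by (metis au mult.assoc mult_1)
  then show ?thesis using that by blast
qed

lemma Sat_multiples_primitive:
  assumes "w \<in> int_vecs d" and primitive: "\<And>q. prime q \<Longrightarrow> \<not> (\<forall>j. q dvd w j)"
  shows "Sat d {(\<lambda>j. c * w j) | c. True} = {(\<lambda>j. t * w j) | t. True}"
proof (intro equalityI subsetI)
  fix u assume "u \<in> Sat d {(\<lambda>j. c * w j) | c. True}"
  then obtain c c' where "c \<noteq> 0" and "(\<lambda>j. c * u j) = (\<lambda>j. c' * w j)"
    unfolding Sat_def by blast
  then have "c * u j = c' * w j" for j by (simp add: fun_eq_iff)
  then obtain t where "\<And>j. u j = t * w j"
    using multiple_of_primitive_vector[OF primitive \<open>c \<noteq> 0\<close>] by blast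
  then show "u \<in> {(\<lambda>j. t * w j) | t. True}" by auto
next
  fix u assume "u \<in> {(\<lambda>j. t * w j) | t. True}"
  then obtain t where "u = (\<lambda>j. t * w j)" by blast
  then have "u \<in> int_vecs d" "(\<lambda>j. 1 * u j) \<in> {(\<lambda>j. c * w j) | c. True}"
    using \<open>w \<in> int_vecs d\<close> unfolding int_vecs_def by auto
  then show "u \<in> Sat d {(\<lambda>j. c * w j) | c. True}"
    unfolding Sat_def using one_neq_zero by blast
qed

lemma prime_nth_prime: "prime (nth_prime k)"
  unfolding nth_prime_def using enumerate_in_set[OF primes_infinite] by blast

lemma strict_mono_nth_prime: "strict_mono nth_prime"
  unfolding nth_prime_def strict_mono_def using enumerate_mono[OF _ primes_infinite] by blast

lemma multiplicity_prod_prime_powers_inj: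
  fixes P :: "nat \<Rightarrow> nat"
  assumes "inj_on P {..<s}" "\<And>k. k < s \<Longrightarrow> prime (P k)" "k0 < s"
  shows "multiplicity (P k0) (\<Prod>k<s. P k ^ h k) = h k0"
proof -
  define g where "g = h \<circ> the_inv_into {..<s} P"
  have "(\<Prod>k<s. P k ^ h k) = (\<Prod>p\<in>P ` {..<s}. p ^ g p)"
    using assms(1) by (simp add: prod.reindex g_def the_inv_into_f_f)
  also have "multiplicity (P k0) \<dots> = g (P k0)"
    using assms by (subst multiplicity_prod_prime_powers) auto
  finally show ?thesis
    using assms by (simp add: g_def the_inv_into_f_f)
qed

lemma powi_eq_power_div_power: "x powi e = x ^ nat e / x ^ nat (- e)"
  for x :: "'a::field"
  by (auto simp: power_int_def power_inverse divide_inverse)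

lemma power_int_sum: "x \<noteq> 0 \<Longrightarrow> x powi (\<Sum>j\<in>J. f j) = (\<Prod>j\<in>J. x powi f j)"
  for x :: "'a::field"
  by (induction J rule: infinite_finite_induct) (simp_all add: power_int_add)

lemma prod_prime_powi_eq_iff:
  fixes P :: "nat \<Rightarrow> nat"
  assumes "inj_on P {..<s}" "\<And>k. k < s \<Longrightarrow> prime (P k)"
  shows "(\<Prod>k<s. (of_nat (P k) :: 'a::field_char_0) powi e k) = (\<Prod>k<s. of_nat (P k) powi e' k)
    \<longleftrightarrow> (\<forall>k<s. e k = e' k)"
proof
  define N where "N f = (\<Prod>k<s. P k ^ f k)" for f
  have "N f \<noteq> 0" for f
    unfolding N_def using assms(2) by (simp add: prod_zero_iff prime_gt_0_nat)
  have split: "(\<Prod>k<s. (of_nat (P k) :: 'a) powi e k) = of_nat (N (\<lambda>k. nat (e k))) / of_nat (N (\<lambda>k. nat (- e k)))"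
    for e
    unfolding N_def by (simp add: powi_eq_power_div_power prod_dividef)
  assume "(\<Prod>k<s. (of_nat (P k) :: 'a) powi e k) = (\<Prod>k<s. of_nat (P k) powi e' k)"
  then have "(of_nat (N (\<lambda>k. nat (e k)) * N (\<lambda>k. nat (- e' k))) :: 'a) =
      of_nat (N (\<lambda>k. nat (e' k)) * N (\<lambda>k. nat (- e k)))"
    using \<open>\<And>f. N f \<noteq> 0\<close> unfolding split of_nat_mult by (simp add: frac_eq_eq)
  then have "N (\<lambda>k. nat (e k) + nat (- e' k)) = N (\<lambda>k. nat (e' k) + nat (- e k))"
    unfolding of_nat_eq_iff by (simp add: N_def power_add prod.distrib)
  then have "nat (e k) + nat (- e' k) = nat (e' k) + nat (- e k)" if "k < s" for k
    using multiplicity_prod_prime_powers_inj[OF assms that] unfolding N_def by metis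
  then show "\<forall>k<s. e k = e' k" by fastforce
qed simp

section \<open>Invariant ideals of diagonal loops\<close>

lemma geometric_sequences_independent:
  fixes a :: "'a::idom \<Rightarrow> 'a"
  assumes "finite Z" "\<And>n. (\<Sum>z\<in>Z. a z * z ^ n) = 0" "z \<in> Z"
  shows "a z = 0"
  using assms
proof (induction Z arbitrary: a z rule: finite_induct)
  case (insert z0 Z)
  have sum_insert: "a z0 * z0 ^ n + (\<Sum>z\<in>Z. a z * z ^ n) = 0" for n
    using insert.prems(1) insert.hyps by simp
  text \<open>Multiplying by \<open>z - z\<^sub>0\<close> eliminates the term of \<open>z\<^sub>0\<close>.\<close>
  have "(\<Sum>z\<in>Z. (a z * (z - z0)) * z ^ n) = 0" for n
  proof -
    have "(\<Sum>z\<in>Z. (a z * (z - z0)) * z ^ n) = (\<Sum>z\<in>Z. a z * z ^ Suc n) - z0 * (\<Sum>z\<in>Z. a z * z ^ n)"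
      by (simp add: sum_distrib_left sum_subtractf algebra_simps)
    also have "\<dots> = 0"
      using sum_insert[of "Suc n"] sum_insert[of n]
      by (simp add: algebra_simps eq_neg_iff_add_eq_0[symmetric] add_eq_0_iff2)
    finally show ?thesis .
  qed
  then have "\<forall>z\<in>Z. a z = 0"
    using insert.IH[of "\<lambda>z. a z * (z - z0)"] insert.hyps(2) by auto
  moreover from this have "a z0 = 0" using sum_insert[of 0] by simp
  ultimately show ?case using insert.prems(2) by auto
qed simp

lemma sum_powers_vanish_imp_fibre_sums_vanish:
  fixes c :: "'b \<Rightarrow> 'a::idom"
  assumes "finite K" "\<And>n. (\<Sum>m\<in>K. c m * \<mu> m ^ n) = 0" "m0 \<in> K"
  shows "(\<Sum>m\<in>{m\<in>K. \<mu> m = \<mu> m0}. c m) = 0"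
proof (rule geometric_sequences_independent[of "\<mu> ` K" "\<lambda>z. \<Sum>m\<in>{m\<in>K. \<mu> m = z}. c m"])
  fix n
  have "(\<Sum>z\<in>\<mu> ` K. (\<Sum>m\<in>{m\<in>K. \<mu> m = z}. c m) * z ^ n) = (\<Sum>m\<in>K. c m * \<mu> m ^ n)"
    using sum.image_gen[OF \<open>finite K\<close>, of "\<lambda>m. c m * \<mu> m ^ n" \<mu>]
    by (simp add: sum_distrib_right)
  then show "(\<Sum>z\<in>\<mu> ` K. (\<Sum>m\<in>{m\<in>K. \<mu> m = z}. c m) * z ^ n) = 0"
    using assms(2) by simp
qed (use assms in auto)

lemma loop_orbit_diagonal:
  "loop_orbit d (\<lambda>i j. if i = j then L j else 0) (\<lambda>i. if i < d then 1 else 0) n =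
     (\<lambda>i. if i < d then L i ^ n else 0)"
proof (induction n)
  case 0
  show ?case by (rule ext) (simp add: loop_orbit_def)
next
  case (Suc n)
  have "(\<Sum>j<d. (if i = j then L j else 0) * (if j < d then L j ^ n else 0)) = L i ^ Suc n"
    if "i < d" for i
    using that by (simp add: if_distrib[of "\<lambda>x. x * _"] sum.delta cong: if_cong)
  then show ?case
    using Suc by (auto simp: loop_orbit_def mat_vec_def)
qed

lemma monom_value_orbit:
  assumes "Poly_Mapping.keys m \<subseteq> {..<d}"
  shows "monom_value m (\<lambda>i. if i < d then L i ^ n else 0) = monom_value m L ^ n"
  unfolding monom_value_def prod_power_distrib using assms
  by (intro prod.cong) (auto simp flip: power_mult simp: mult.commute)

lemma eval_mpoly_orbit:
  assumes "P \<in> qbar_poly d"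
  shows "eval_mpoly P (\<lambda>i. if i < d then L i ^ n else 0) =
    (\<Sum>m\<in>Poly_Mapping.keys P. Poly_Mapping.lookup P m * monom_value m L ^ n)"
  unfolding eval_mpoly_def monom_value_def[symmetric] using qbar_polyD(2)[OF assms]
  by (intro sum.cong) (auto simp: monom_value_orbit)

text \<open>Replacing every monomial by a fixed representative of its fibre under \<open>\<mu>\<close> leaves a
  polynomial whose coefficients are the fibre sums, i.e. zero.\<close>
lemma mem_principal_ideal_if_fibre_sums_vanish:
  assumes P: "P \<in> qbar_poly d"
    and fibre_sums: "\<And>m0. m0 \<in> Poly_Mapping.keys P \<Longrightarrow>
      (\<Sum>m\<in>{m\<in>Poly_Mapping.keys P. \<mu> m = \<mu> m0}. Poly_Mapping.lookup P m) = 0"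
    and differences: "\<And>m m'. m \<in> Poly_Mapping.keys P \<Longrightarrow> m' \<in> Poly_Mapping.keys P \<Longrightarrow>
      \<mu> m = \<mu> m' \<Longrightarrow> monom m - monom m' \<in> principal_ideal d p"
  shows "P \<in> principal_ideal d p"
proof -
  define K where "K = Poly_Mapping.keys P"
  define c where "c = Poly_Mapping.lookup P"
  define rep where "rep z = (SOME m. m \<in> K \<and> \<mu> m = z)" for z
  have rep: "rep (\<mu> m) \<in> K" "\<mu> (rep (\<mu> m)) = \<mu> m" if "m \<in> K" for m
    using someI[of "\<lambda>m'. m' \<in> K \<and> \<mu> m' = \<mu> m" m] that by (auto simp: rep_def)
  have "(\<Sum>m\<in>K. Poly_Mapping.single (rep (\<mu> m)) (c m)) =
      (\<Sum>z\<in>\<mu> ` K. \<Sum>m\<in>{m\<in>K. \<mu> m = z}. Poly_Mapping.single (rep (\<mu> m)) (c m))"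
    by (rule sum.image_gen) (simp add: K_def)
  also have "\<dots> = (\<Sum>z\<in>\<mu> ` K. Poly_Mapping.single (rep z) (\<Sum>m\<in>{m\<in>K. \<mu> m = z}. c m))"
    unfolding single_sum by (intro sum.cong) auto
  also have "\<dots> = 0"
    using fibre_sums by (intro sum.neutral) (auto simp: K_def c_def)
  finally have "P = (\<Sum>m\<in>K. Poly_Mapping.single m (c m) - Poly_Mapping.single (rep (\<mu> m)) (c m))"
    by (subst poly_mapping_sum_single) (simp add: K_def c_def sum_subtractf)
  also have "\<dots> = (\<Sum>m\<in>K. Poly_Mapping.single 0 (c m) * (monom m - monom (rep (\<mu> m))))"
    by (simp add: monom_def mult_single right_diff_distrib)
  also have "\<dots> \<in> principal_ideal d p"
  proof (intro principal_ideal_sum principal_ideal_mult)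
    fix m assume "m \<in> K"
    then show "Poly_Mapping.single 0 (c m) \<in> qbar_poly d"
      using qbar_polyD(1)[OF P] by (intro qbar_poly_single) (auto simp: c_def)
    show "monom m - monom (rep (\<mu> m)) \<in> principal_ideal d p"
      using differences rep \<open>m \<in> K\<close> by (simp add: K_def)
  qed
  finally show ?thesis .
qed

theorem invariant_ideal_diagonal_loop:
  assumes p: "p \<in> invariant_ideal d (\<lambda>i j. if i = j then L j else 0) (\<lambda>i. if i < d then 1 else 0)"
    and same_value: "\<And>m m'. Poly_Mapping.keys m \<subseteq> {..<d} \<Longrightarrow> Poly_Mapping.keys m' \<subseteq> {..<d} \<Longrightarrow>
      monom_value m L = monom_value m' L \<Longrightarrow> monom m - monom m' \<in> principal_ideal d p"
  shows "invariant_ideal d (\<lambda>i j. if i = j then L j else 0) (\<lambda>i. if i < d then 1 else 0) =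
    principal_ideal d p"
proof (intro equalityI subsetI)
  fix P assume "P \<in> invariant_ideal d (\<lambda>i j. if i = j then L j else 0) (\<lambda>i. if i < d then 1 else 0)"
  then have P: "P \<in> qbar_poly d"
    and sums: "\<And>n. (\<Sum>m\<in>Poly_Mapping.keys P. Poly_Mapping.lookup P m * monom_value m L ^ n) = 0"
    by (auto simp: invariant_ideal_def loop_orbit_diagonal eval_mpoly_orbit)
  show "P \<in> principal_ideal d p"
  proof (rule mem_principal_ideal_if_fibre_sums_vanish[OF P, of "\<lambda>m. monom_value m L"])
    fix m0 assume "m0 \<in> Poly_Mapping.keys P"
    then show "(\<Sum>m\<in>{m \<in> Poly_Mapping.keys P. monom_value m L = monom_value m0 L}. Poly_Mapping.lookup P m) = 0"
      by (intro sum_powers_vanish_imp_fibre_sums_vanish sums) simp_all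
  next
    fix m m' assume "m \<in> Poly_Mapping.keys P" "m' \<in> Poly_Mapping.keys P" "monom_value m L = monom_value m' L"
    then show "monom m - monom m' \<in> principal_ideal d p"
      using same_value qbar_polyD(2)[OF P] by simp
  qed
next
  fix Q assume "Q \<in> principal_ideal d p"
  then obtain q where "q \<in> qbar_poly d" "Q = q * p"
    unfolding principal_ideal_def by blast
  with p show "Q \<in> invariant_ideal d (\<lambda>i j. if i = j then L j else 0) (\<lambda>i. if i < d then 1 else 0)"
    unfolding invariant_ideal_def by (simp add: eval_mpoly_mult qbar_poly_mult)
qed

definition exponent_diff :: "(nat \<Rightarrow>\<^sub>0 nat) \<Rightarrow> (nat \<Rightarrow>\<^sub>0 nat) \<Rightarrow> nat \<Rightarrow> int" where
  "exponent_diff m m' j = int (Poly_Mapping.lookup m j) - int (Poly_Mapping.lookup m' j)"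

lemma exponent_diff_in_int_vecs:
  assumes "Poly_Mapping.keys m \<subseteq> {..<d}" "Poly_Mapping.keys m' \<subseteq> {..<d}"
  shows "exponent_diff m m' \<in> int_vecs d"
  unfolding int_vecs_def
proof (intro CollectI allI impI)
  fix i assume "i \<ge> d"
  then have "i \<notin> Poly_Mapping.keys m" "i \<notin> Poly_Mapping.keys m'" using assms by auto
  then show "exponent_diff m m' i = 0" by (simp add: exponent_diff_def in_keys_iff)
qed

lemma monom_diff_mem_binomial_ideal_nat:
  assumes disj: "\<And>j. Poly_Mapping.lookup \<alpha> j = 0 \<or> Poly_Mapping.lookup \<beta> j = 0"
    and kb: "Poly_Mapping.keys \<beta> \<subseteq> {..<d}"
    and "Poly_Mapping.keys m \<subseteq> {..<d}"
    and "exponent_diff m m' = (\<lambda>j. int T * exponent_diff \<alpha> \<beta> j)"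
  shows "monom m - monom m' \<in> principal_ideal d (monom \<alpha> - monom \<beta>)"
  using assms(3,4)
proof (induction T arbitrary: m)
  case 0
  then have "m = m'"
    by (intro poly_mapping_eqI) (simp add: exponent_diff_def fun_eq_iff)
  then show ?case using principal_ideal_0 by simp
next
  case (Suc T)
  have diff: "int (Poly_Mapping.lookup m j) - int (Poly_Mapping.lookup m' j) =
      int (Suc T) * (int (Poly_Mapping.lookup \<alpha> j) - int (Poly_Mapping.lookup \<beta> j))" for j
    using Suc.prems(2) by (simp add: exponent_diff_def fun_eq_iff)
  have le: "Poly_Mapping.lookup \<alpha> j \<le> Poly_Mapping.lookup m j" for j
    using diff[of j] disj[of j] by (cases "Poly_Mapping.lookup \<beta> j = 0")
      (auto simp: algebra_simps simp flip: of_nat_mult of_nat_add)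
  have lookup_step: "int (Poly_Mapping.lookup (m - \<alpha> + \<beta>) j) =
      int (Poly_Mapping.lookup m j) - int (Poly_Mapping.lookup \<alpha> j) + int (Poly_Mapping.lookup \<beta> j)" for j
    using le[of j] by (simp add: lookup_add lookup_minus of_nat_diff trans_le_add1)
  have m: "m = (m - \<alpha>) + \<alpha>"
    using le by (intro poly_mapping_eqI) (simp add: lookup_add lookup_minus)
  have "monom m - monom ((m - \<alpha>) + \<beta>) = monom (m - \<alpha>) * (monom \<alpha> - monom \<beta>)"
    by (subst m) (simp add: monom_add right_diff_distrib)
  moreover have "monom (m - \<alpha>) \<in> qbar_poly d"
    using keys_diff_subset[of m \<alpha>] Suc.prems(1) by (intro qbar_poly_monom) blast
  ultimately have step: "monom m - monom ((m - \<alpha>) + \<beta>) \<in> principal_ideal d (monom \<alpha> - monom \<beta>)"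
    using principal_ideal_mult principal_ideal_generator by metis
  have "monom ((m - \<alpha>) + \<beta>) - monom m' \<in> principal_ideal d (monom \<alpha> - monom \<beta>)"
  proof (rule Suc.IH)
    show "Poly_Mapping.keys (m - \<alpha> + \<beta>) \<subseteq> {..<d}"
      using keys_add[of "m - \<alpha>" \<beta>] keys_diff_subset[of m \<alpha>] Suc.prems(1) kb by blast
    show "exponent_diff (m - \<alpha> + \<beta>) m' = (\<lambda>j. int T * exponent_diff \<alpha> \<beta> j)"
      unfolding exponent_diff_def lookup_step using diff by (simp add: fun_eq_iff algebra_simps)
  qed
  from principal_ideal_add[OF step this] show ?case by simp
qed

lemma monom_diff_mem_binomial_ideal:
  assumes disj: "\<And>j. Poly_Mapping.lookup \<alpha> j = 0 \<or> Poly_Mapping.lookup \<beta> j = 0"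
    and "Poly_Mapping.keys \<beta> \<subseteq> {..<d}"
    and "Poly_Mapping.keys m \<subseteq> {..<d}" "Poly_Mapping.keys m' \<subseteq> {..<d}"
    and "exponent_diff m m' = (\<lambda>j. t * exponent_diff \<alpha> \<beta> j)"
  shows "monom m - monom m' \<in> principal_ideal d (monom \<alpha> - monom \<beta>)"
proof (cases "t \<ge> 0")
  case True
  then show ?thesis
    using monom_diff_mem_binomial_ideal_nat[OF assms(1-3), of m' "nat t"] assms(5) by simp
next
  case False
  have "exponent_diff m' m = (\<lambda>j. int (nat (- t)) * exponent_diff \<alpha> \<beta> j)"
    using False assms(5) by (simp add: fun_eq_iff exponent_diff_def) (metis minus_diff_eq)
  then have "monom m' - monom m \<in> principal_ideal d (monom \<alpha> - monom \<beta>)"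
    using monom_diff_mem_binomial_ideal_nat[OF assms(1,2,4)] by blast
  then show ?thesis using principal_ideal_uminus by fastforce
qed

lemma binomial_mem_invariant_ideal_diagonal:
  assumes "Poly_Mapping.keys \<alpha> \<subseteq> {..<d}" "Poly_Mapping.keys \<beta> \<subseteq> {..<d}"
    and "monom_value \<alpha> L = monom_value \<beta> L"
  shows "monom \<alpha> - monom \<beta> \<in> invariant_ideal d (\<lambda>i j. if i = j then L j else 0) (\<lambda>i. if i < d then 1 else 0)"
  using assms
  by (simp add: invariant_ideal_def loop_orbit_diagonal eval_mpoly_diff eval_mpoly_monom
      monom_value_orbit qbar_poly_diff qbar_poly_monom)

theorem invariant_ideal_diagonal_binomial:
  assumes keys: "Poly_Mapping.keys \<alpha> \<subseteq> {..<d}" "Poly_Mapping.keys \<beta> \<subseteq> {..<d}"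
    and disj: "\<And>j. Poly_Mapping.lookup \<alpha> j = 0 \<or> Poly_Mapping.lookup \<beta> j = 0"
    and same_value: "\<And>m m'. Poly_Mapping.keys m \<subseteq> {..<d} \<Longrightarrow> Poly_Mapping.keys m' \<subseteq> {..<d} \<Longrightarrow>
      monom_value m L = monom_value m' L \<longleftrightarrow> (\<exists>t. exponent_diff m m' = (\<lambda>j. t * exponent_diff \<alpha> \<beta> j))"
  shows "invariant_ideal d (\<lambda>i j. if i = j then L j else 0) (\<lambda>i. if i < d then 1 else 0) =
    principal_ideal d (monom \<alpha> - monom \<beta>)"
proof (rule invariant_ideal_diagonal_loop)
  show "monom \<alpha> - monom \<beta> \<in> invariant_ideal d (\<lambda>i j. if i = j then L j else 0) (\<lambda>i. if i < d then 1 else 0)"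
    using same_value[OF keys] by (intro binomial_mem_invariant_ideal_diagonal keys) force
  show "monom m - monom m' \<in> principal_ideal d (monom \<alpha> - monom \<beta>)"
    if "Poly_Mapping.keys m \<subseteq> {..<d}" "Poly_Mapping.keys m' \<subseteq> {..<d}" "monom_value m L = monom_value m' L"
    for m m'
    using that same_value disj keys(2) by (metis monom_diff_mem_binomial_ideal)
qed

section \<open>Prime-power eigenvalues\<close>

lemma monom_value_prod_powi:
  assumes "Poly_Mapping.keys m \<subseteq> {..<d}" "\<And>k. b k \<noteq> 0"
  shows "monom_value m (\<lambda>j. \<Prod>k<s. b k powi A k j) =
    (\<Prod>k<s. b k powi (\<Sum>j<d. A k j * int (Poly_Mapping.lookup m j)))"
proof -
  have "monom_value m (\<lambda>j. \<Prod>k<s. b k powi A k j) =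
      (\<Prod>j<d. \<Prod>k<s. b k powi (A k j * int (Poly_Mapping.lookup m j)))"
    using assms(1) by (simp add: monom_value_superset[of "{..<d}"] prod_power_distrib power_int_mult)
  also have "\<dots> = (\<Prod>k<s. b k powi (\<Sum>j<d. A k j * int (Poly_Mapping.lookup m j)))"
    using assms(2) by (subst prod.swap) (simp add: power_int_sum)
  finally show ?thesis .
qed

lemma monom_value_prime_powers_eq_iff:
  assumes "Poly_Mapping.keys m \<subseteq> {..<d}" "Poly_Mapping.keys m' \<subseteq> {..<d}"
  shows "monom_value m (\<lambda>j. \<Prod>k<s. (of_nat (nth_prime k) :: complex) powi A k j) =
      monom_value m' (\<lambda>j. \<Prod>k<s. of_nat (nth_prime k) powi A k j)
    \<longleftrightarrow> (\<forall>k<s. (\<Sum>j<d. A k j * exponent_diff m m' j) = 0)"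
proof -
  have "inj_on nth_prime {..<s}" using strict_mono_nth_prime strict_mono_imp_inj_on by blast
  moreover have "(of_nat (nth_prime k) :: complex) \<noteq> 0" for k
    using prime_nth_prime[of k] by (auto simp: prime_gt_0_nat)
  ultimately show ?thesis
    using assms prime_nth_prime
    by (simp add: monom_value_prod_powi prod_prime_powi_eq_iff exponent_diff_def
        right_diff_distrib sum_subtractf)
qed

theorem corollary1p3:
  fixes d s :: nat and \<alpha> \<beta> :: "nat \<Rightarrow>\<^sub>0 nat" and A :: "nat \<Rightarrow> nat \<Rightarrow> int"
  assumes "d \<ge> 1" and "s \<ge> 1"
    and "Poly_Mapping.keys \<alpha> \<subseteq> {..<d}" and "Poly_Mapping.keys \<beta> \<subseteq> {..<d}"
    and "irreducible_in d (monom \<alpha> - monom \<beta>)"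
    and "{u \<in> int_vecs d. \<forall>i<s. (\<Sum>j<d. A i j * u j) = 0}
         = Sat d {(\<lambda>j. c * (int (Poly_Mapping.lookup \<alpha> j) - int (Poly_Mapping.lookup \<beta> j))) | c::int. True}"
  shows "invariant_ideal d
           (\<lambda>i j. if i = j then (\<Prod>k<s. (of_nat (nth_prime k) :: complex) powi A k j) else 0)
           (\<lambda>i. if i < d then 1 else 0)
         = principal_ideal d (monom \<alpha> - monom \<beta>)"
proof -
  note keys = assms(3,4) and irr = assms(5)
  define \<Lambda> where "\<Lambda> j = (\<Prod>k<s. (of_nat (nth_prime k) :: complex) powi A k j)" for j
  have "\<And>q. prime q \<Longrightarrow> \<not> (\<forall>j. q dvd exponent_diff \<alpha> \<beta> j)"
    using irreducible_binomial_primitive[OF irr keys] by (simp add: exponent_diff_def)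
  then have kernel: "{u \<in> int_vecs d. \<forall>k<s. (\<Sum>j<d. A k j * u j) = 0} =
      {(\<lambda>j. t * exponent_diff \<alpha> \<beta> j) | t. True}"
    using assms(6) Sat_multiples_primitive[OF exponent_diff_in_int_vecs[OF keys]]
    by (simp add: exponent_diff_def)
  have "monom_value m \<Lambda> = monom_value m' \<Lambda> \<longleftrightarrow>
      (\<exists>t. exponent_diff m m' = (\<lambda>j. t * exponent_diff \<alpha> \<beta> j))"
    if "Poly_Mapping.keys m \<subseteq> {..<d}" "Poly_Mapping.keys m' \<subseteq> {..<d}" for m m'
    using monom_value_prime_powers_eq_iff[OF that] exponent_diff_in_int_vecs[OF that] kernel
    unfolding \<Lambda>_def by blast
  from invariant_ideal_diagonal_binomial[OF keys irreducible_binomial_disjoint_supports[OF irr keys] this]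
  show ?thesis unfolding \<Lambda>_def .
qed

end
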